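(* Let $g(s)$ be a smooth one-parameter family of Hermitian metrics compatible with a fixed complex structure $J$, and let $h=\frac{\partial}{\partial s}g(s)$. Then $$\frac{\partial}{\partial s}|T|^2=\langle h,-2Q^1+Q^2\rangle+4\langle\nabla h,T\rangle,$$ where $$\langle\nabla h,T\rangle=\frac12g^{i\bar j}g^{k\bar l}g^{m\bar n}\left(\nabla_ih_{k\bar n}T_{\bar j\bar lm}+T_{ik\bar n}\nabla_{\bar j}h_{\bar lm}\right).$$
   Context: In local holomorphic coordinates write $g_{i\bar j}$, $g^{i\bar j}$; $h_{\bar l m}=h_{m\bar l}$. The Chern connection $\nabla$ has Christoffel symbols $\Gamma_{ij}^k=g^{k\bar l}\partial_i g_{j\bar l}$ and conjugates, mixed symbols zero. Torsion $T_{ij\bar k}=\partial_i g_{j\bar k}-\partial_j g_{i\bar k}$, $T_{\bar i\bar j k}=\overline{T_{ij\bar k}}$, $|T|^2=g^{i\bar p}g^{j\bar q}g^{r\bar k}T_{ij\bar k}T_{\bar p\bar qr}$. $Q^1_{i\bar j}=g^{k\bar l}g^{m\bar n}T_{ik\bar n}T_{\bar j\bar l m}$, $Q^2_{i\bar j}=g^{k\bar l}g^{m\bar n}T_{\bar l\bar n i}T_{km\bar j}$. For $(1,1)$ tensors, $\langle h,A\rangle=h^{i\bar j}A_{i\bar j}$ with $h^{i\bar j}=g^{i\bar q}g^{p\bar j}h_{p\bar q}$. *)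

theory Defs
  imports "HOL-Analysis.Analysis"
begin

fun Ck_on :: "nat \<Rightarrow> 'a::real_normed_vector set \<Rightarrow> ('a \<Rightarrow> 'b::real_normed_vector) \<Rightarrow> bool" where
  "Ck_on 0 S f = continuous_on S f"
| "Ck_on (Suc k) S f = (f differentiable_on S \<and>
      (\<forall>v. Ck_on k S (\<lambda>x. frechet_derivative f (at x) v)))"

definition smooth_on :: "'a::real_normed_vector set \<Rightarrow> ('a \<Rightarrow> 'b::real_normed_vector) \<Rightarrow> bool" where
  "smooth_on S f = (\<forall>k. Ck_on k S f)"

definition dz :: "(complex^'n \<Rightarrow> complex) \<Rightarrow> 'n \<Rightarrow> complex^'n \<Rightarrow> complex" where
  "dz f i z = (frechet_derivative f (at z) (axis i 1)
              - \<i> * frechet_derivative f (at z) (axis i \<i>)) / 2"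

definition dzb :: "(complex^'n \<Rightarrow> complex) \<Rightarrow> 'n \<Rightarrow> complex^'n \<Rightarrow> complex" where
  "dzb f i z = (frechet_derivative f (at z) (axis i 1)
              + \<i> * frechet_derivative f (at z) (axis i \<i>)) / 2"

text \<open>A metric G is given by its matrix G z $ i $ j = g_{i bar j}.
  ginv G z $ k $ l = g^{k bar l}, characterised by  sum_l g^{k bar l} g_{j bar l} = delta_{kj}.\<close>
definition ginv :: "(complex^'n \<Rightarrow> complex^'n^'n) \<Rightarrow> complex^'n \<Rightarrow> complex^'n^'n" where
  "ginv G z = matrix_inv (transpose (G z))"

definition hermitian_metric_at :: "complex^'n^'n \<Rightarrow> bool" where
  "hermitian_metric_at M \<longleftrightarrow>
     (\<forall>i j. M $ j $ i = cnj (M $ i $ j)) \<and>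
     (\<forall>v::complex^'n. v \<noteq> 0 \<longrightarrow> 0 < Re (\<Sum>i\<in>UNIV. \<Sum>j\<in>UNIV. M $ i $ j * v $ i * cnj (v $ j)))"

definition chris :: "(complex^'n \<Rightarrow> complex^'n^'n) \<Rightarrow> 'n \<Rightarrow> 'n \<Rightarrow> 'n \<Rightarrow> complex^'n \<Rightarrow> complex" where
  "chris G i j k z = (\<Sum>l\<in>UNIV. ginv G z $ k $ l * dz (\<lambda>w. G w $ j $ l) i z)"

definition tor :: "(complex^'n \<Rightarrow> complex^'n^'n) \<Rightarrow> 'n \<Rightarrow> 'n \<Rightarrow> 'n \<Rightarrow> complex^'n \<Rightarrow> complex" where
  "tor G i j k z = dz (\<lambda>w. G w $ j $ k) i z - dz (\<lambda>w. G w $ i $ k) j z"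

definition normT2 :: "(complex^'n \<Rightarrow> complex^'n^'n) \<Rightarrow> complex^'n \<Rightarrow> complex" where
  "normT2 G z = (\<Sum>i\<in>UNIV. \<Sum>j\<in>UNIV. \<Sum>k\<in>UNIV. \<Sum>p\<in>UNIV. \<Sum>q\<in>UNIV. \<Sum>r\<in>UNIV.
      ginv G z $ i $ p * ginv G z $ j $ q * ginv G z $ r $ k
      * tor G i j k z * cnj (tor G p q r z))"

definition Q1 :: "(complex^'n \<Rightarrow> complex^'n^'n) \<Rightarrow> complex^'n \<Rightarrow> 'n \<Rightarrow> 'n \<Rightarrow> complex" where
  "Q1 G z i j = (\<Sum>k\<in>UNIV. \<Sum>l\<in>UNIV. \<Sum>m\<in>UNIV. \<Sum>n\<in>UNIV.
      ginv G z $ k $ l * ginv G z $ m $ n * tor G i k n z * cnj (tor G j l m z))"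

definition Q2 :: "(complex^'n \<Rightarrow> complex^'n^'n) \<Rightarrow> complex^'n \<Rightarrow> 'n \<Rightarrow> 'n \<Rightarrow> complex" where
  "Q2 G z i j = (\<Sum>k\<in>UNIV. \<Sum>l\<in>UNIV. \<Sum>m\<in>UNIV. \<Sum>n\<in>UNIV.
      ginv G z $ k $ l * ginv G z $ m $ n * cnj (tor G l n i z) * tor G k m j z)"

text \<open><h,A> = h^{i bar j} A_{i bar j},  h^{i bar j} = g^{i bar q} g^{p bar j} h_{p bar q};
  H $ p $ q = h_{p bar q}.\<close>
definition inner11 :: "(complex^'n \<Rightarrow> complex^'n^'n) \<Rightarrow> complex^'n \<Rightarrow> complex^'n^'n
    \<Rightarrow> ('n \<Rightarrow> 'n \<Rightarrow> complex) \<Rightarrow> complex" where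
  "inner11 G z H A = (\<Sum>i\<in>UNIV. \<Sum>j\<in>UNIV. \<Sum>p\<in>UNIV. \<Sum>q\<in>UNIV.
      ginv G z $ i $ q * ginv G z $ p $ j * H $ p $ q * A i j)"

text \<open>Chern covariant derivatives of a (1,1)-tensor Hf w $ k $ n = h_{k bar n}:
  nabla_i h_{k bar n} and nabla_{bar j} h_{bar l m} = nabla_{bar j} h_{m bar l}.\<close>
definition nabh :: "(complex^'n \<Rightarrow> complex^'n^'n) \<Rightarrow> (complex^'n \<Rightarrow> complex^'n^'n)
    \<Rightarrow> 'n \<Rightarrow> 'n \<Rightarrow> 'n \<Rightarrow> complex^'n \<Rightarrow> complex" where
  "nabh G Hf i k n z = dz (\<lambda>w. Hf w $ k $ n) i z - (\<Sum>p\<in>UNIV. chris G i k p z * Hf z $ p $ n)"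

definition nabbh :: "(complex^'n \<Rightarrow> complex^'n^'n) \<Rightarrow> (complex^'n \<Rightarrow> complex^'n^'n)
    \<Rightarrow> 'n \<Rightarrow> 'n \<Rightarrow> 'n \<Rightarrow> complex^'n \<Rightarrow> complex" where
  "nabbh G Hf j l m z = dzb (\<lambda>w. Hf w $ m $ l) j z - (\<Sum>q\<in>UNIV. cnj (chris G j l q z) * Hf z $ m $ q)"

definition innerNT :: "(complex^'n \<Rightarrow> complex^'n^'n) \<Rightarrow> (complex^'n \<Rightarrow> complex^'n^'n)
    \<Rightarrow> complex^'n \<Rightarrow> complex" where
  "innerNT G Hf z = (1/2) * (\<Sum>i\<in>UNIV. \<Sum>j\<in>UNIV. \<Sum>k\<in>UNIV. \<Sum>l\<in>UNIV. \<Sum>m\<in>UNIV. \<Sum>n\<in>UNIV.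
      ginv G z $ i $ j * ginv G z $ k $ l * ginv G z $ m $ n
      * (nabh G Hf i k n z * cnj (tor G j l m z) + tor G i k n z * nabbh G Hf j l m z))"

end

theory Submission
  imports Defs
begin

text \<open>
  Write |T|^2 = g^{i\bar p} g^{j\bar q} g^{r\bar k} T_{ij\bar k} \overline{T_{pq\bar r}}, so its
  s-derivative has five terms. Differentiating g^{-1} g = 1 gives
  \partial_s g^{a\bar b} = - g^{a\bar y} h_{x\bar y} g^{x\bar b}: in the two terms where this falls on a
  holomorphic slot of T it produces -<h,Q^1> each, on the antiholomorphic slot -<h,Q^2>.
  As the family is C^2, \partial_s commutes with \partial_i, so
  \partial_s T_{ij\bar k} = \partial_i h_{j\bar k} - \partial_j h_{i\bar k}; since the antisymmetric part of
  the Christoffel symbols is the torsion, this is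
  \nabla_i h_{j\bar k} - \nabla_j h_{i\bar k} + g^{p\bar l} T_{ij\bar l} h_{p\bar k}.
  Hence each of the two remaining terms contributes half of 4<\nabla h,T> plus <h,Q^2>, and the five
  terms add up to <h,-2Q^1+Q^2> + 4<\nabla h,T>.
\<close>

section \<open>Symmetry of second derivatives\<close>

lemma has_vector_derivative_along_line:
  assumes "(\<phi> has_derivative \<phi>') (at (p + b *\<^sub>R v))"
  shows "((\<lambda>b. \<phi> (p + b *\<^sub>R v)) has_vector_derivative \<phi>' v) (at b)"
proof -
  have "((\<lambda>b. p + b *\<^sub>R v) has_derivative (\<lambda>d. d *\<^sub>R v)) (at b)"
    by (auto intro!: derivative_eq_intros)
  from has_derivative_compose[OF this assms] show ?thesis
    using linear_scale[OF has_derivative_linear[OF assms]]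
    by (simp add: has_vector_derivative_def)
qed

lemma increment_linearization_bound:
  fixes \<phi> :: "real \<Rightarrow> 'b::real_normed_vector"
  assumes "0 \<le> t"
    and \<phi>': "\<And>a. a \<in> {0..t} \<Longrightarrow> (\<phi> has_vector_derivative \<phi>' a) (at a)"
    and bound: "\<And>a. a \<in> {0..t} \<Longrightarrow> norm (\<phi>' a - c) \<le> \<epsilon>"
  shows "norm (\<phi> t - \<phi> 0 - t *\<^sub>R c) \<le> t * \<epsilon>"
proof (cases "t = 0")
  case False
  define \<psi> where "\<psi> a = \<phi> a - a *\<^sub>R c" for a
  have \<psi>': "(\<psi> has_vector_derivative \<phi>' a - c) (at a)" if "a \<in> {0..t}" for a
    unfolding \<psi>_def using \<phi>'[OF that] by (auto intro!: derivative_eq_intros)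
  have "continuous_on {0..t} \<psi>"
    using \<psi>' by (meson continuous_at_imp_continuous_on has_vector_derivative_continuous)
  then have "norm (\<psi> t - \<psi> 0) \<le> t * \<epsilon> - 0 * \<epsilon>"
    using \<open>0 \<le> t\<close> False \<psi>' bound
    by (intro differentiable_bound_general[where f'="\<lambda>a. \<phi>' a - c" and \<phi>'="\<lambda>_. \<epsilon>"])
       (auto intro!: derivative_eq_intros continuous_intros)
  then show ?thesis by (simp add: \<psi>_def algebra_simps)
qed simp

lemma Ck_on_2_derivatives:
  assumes "Ck_on (Suc (Suc 0)) S f" "open S"
  shows "\<And>x. x \<in> S \<Longrightarrow> (f has_derivative frechet_derivative f (at x)) (at x)"
    and "\<And>x v. x \<in> S \<Longrightarrow> ((\<lambda>y. frechet_derivative f (at y) v) has_derivative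
            frechet_derivative (\<lambda>y. frechet_derivative f (at y) v) (at x)) (at x)"
    and "\<And>u v. continuous_on S (\<lambda>y. frechet_derivative (\<lambda>y. frechet_derivative f (at y) v) (at y) u)"
  using assms
  by (auto simp: differentiable_on_eq_differentiable_at frechet_derivative_works[symmetric])

lemma increment_along_line_bound:
  assumes "0 \<le> t"
    and W': "\<And>b. b \<in> {0..t} \<Longrightarrow> (W has_derivative W' (p + b *\<^sub>R v)) (at (p + b *\<^sub>R v))"
    and bound: "\<And>b. b \<in> {0..t} \<Longrightarrow> norm (W' (p + b *\<^sub>R v) v - c) \<le> \<epsilon>"
  shows "norm (W (p + t *\<^sub>R v) - W p - t *\<^sub>R c) \<le> t * \<epsilon>"
proof -
  have "norm (W (p + t *\<^sub>R v) - W (p + 0 *\<^sub>R v) - t *\<^sub>R c) \<le> t * \<epsilon>"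
  proof (rule increment_linearization_bound[OF \<open>0 \<le> t\<close>])
    fix b assume "b \<in> {0..t}"
    show "((\<lambda>b. W (p + b *\<^sub>R v)) has_vector_derivative W' (p + b *\<^sub>R v) v) (at b)"
      by (rule has_vector_derivative_along_line[OF W'[OF \<open>b \<in> {0..t}\<close>]])
    show "norm (W' (p + b *\<^sub>R v) v - c) \<le> \<epsilon>"
      by (rule bound[OF \<open>b \<in> {0..t}\<close>])
  qed
  then show ?thesis by simp
qed

lemma second_difference_bound:
  fixes f :: "'a::real_normed_vector \<Rightarrow> 'b::real_normed_vector" and u v :: 'a
  defines "E \<equiv> \<lambda>y. frechet_derivative (\<lambda>y. frechet_derivative f (at y) u) (at y) v"
  assumes C: "Ck_on (Suc (Suc 0)) S f" and "open S" and "0 \<le> t"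
    and near: "\<And>a b. a \<in> {0..t} \<Longrightarrow> b \<in> {0..t} \<Longrightarrow>
      x + a *\<^sub>R u + b *\<^sub>R v \<in> S \<and> norm (E (x + a *\<^sub>R u + b *\<^sub>R v) - E x) \<le> e"
  shows "norm ((f (x + t *\<^sub>R u + t *\<^sub>R v) - f (x + t *\<^sub>R u)) - (f (x + t *\<^sub>R v) - f x)
      - (t * t) *\<^sub>R E x) \<le> e * (t * t)"
proof -
  define W where "W = (\<lambda>y. frechet_derivative f (at y) u)"
  have Df: "\<And>y. y \<in> S \<Longrightarrow> (f has_derivative frechet_derivative f (at y)) (at y)"
    and DW: "\<And>y. y \<in> S \<Longrightarrow> (W has_derivative frechet_derivative W (at y)) (at y)"
    unfolding W_def using Ck_on_2_derivatives(1,2)[OF C \<open>open S\<close>] by auto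
  have "t \<in> {0..t}" "0 \<in> {0..t}"
    using \<open>0 \<le> t\<close> by auto
  have inner: "norm (W (x + a *\<^sub>R u + t *\<^sub>R v) - W (x + a *\<^sub>R u) - t *\<^sub>R E x) \<le> t * e"
    if "a \<in> {0..t}" for a
    using increment_along_line_bound[OF \<open>0 \<le> t\<close> DW] near[OF that] by (simp add: E_def W_def)
  let ?F = "\<lambda>y. f (y + t *\<^sub>R v) - f y"
  have "norm (?F (x + t *\<^sub>R u) - ?F x - t *\<^sub>R (t *\<^sub>R E x)) \<le> t * (t * e)"
  proof (rule increment_along_line_bound[OF \<open>0 \<le> t\<close>,
        where W'="\<lambda>y k. frechet_derivative f (at (y + t *\<^sub>R v)) k - frechet_derivative f (at y) k"])
    fix a assume a: "a \<in> {0..t}"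
    have "x + a *\<^sub>R u + t *\<^sub>R v \<in> S" "x + a *\<^sub>R u \<in> S"
      using near[OF a \<open>t \<in> {0..t}\<close>] near[OF a \<open>0 \<in> {0..t}\<close>] by simp_all
    then show "(?F has_derivative (\<lambda>k. frechet_derivative f (at (x + a *\<^sub>R u + t *\<^sub>R v)) k
        - frechet_derivative f (at (x + a *\<^sub>R u)) k)) (at (x + a *\<^sub>R u))"
      by (auto intro!: derivative_eq_intros Df[THEN has_derivative_compose[rotated]])
    show "norm (frechet_derivative f (at (x + a *\<^sub>R u + t *\<^sub>R v)) u - frechet_derivative f (at (x + a *\<^sub>R u)) u
        - t *\<^sub>R E x) \<le> t * e"
      using inner[OF a] by (simp add: W_def)
  qed
  then show ?thesis
    by (simp add: add_ac mult_ac)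
qed

lemma second_difference_approx:
  fixes f :: "'a::real_normed_vector \<Rightarrow> 'b::real_normed_vector"
  assumes C: "Ck_on (Suc (Suc 0)) S f" and "open S" "x \<in> S" "e > 0"
  shows "\<exists>d>0. \<forall>t. 0 < t \<and> t < d \<longrightarrow>
    norm ((f (x + t *\<^sub>R u + t *\<^sub>R v) - f (x + t *\<^sub>R u)) - (f (x + t *\<^sub>R v) - f x)
      - (t * t) *\<^sub>R frechet_derivative (\<lambda>y. frechet_derivative f (at y) u) (at x) v) \<le> e * (t * t)"
proof -
  define E where "E y = frechet_derivative (\<lambda>y. frechet_derivative f (at y) u) (at y) v" for y
  obtain \<delta> where \<delta>: "\<delta> > 0" "\<And>y. dist y x < \<delta> \<Longrightarrow> y \<in> S \<and> norm (E y - E x) \<le> e"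
  proof -
    have "continuous_on S E"
      unfolding E_def using Ck_on_2_derivatives(3)[OF C \<open>open S\<close>] .
    with \<open>x \<in> S\<close> \<open>e > 0\<close> obtain d1 where "d1 > 0" "\<forall>y\<in>S. dist y x < d1 \<longrightarrow> dist (E y) (E x) < e"
      unfolding continuous_on_iff by blast
    moreover obtain r where "r > 0" "ball x r \<subseteq> S"
      using \<open>open S\<close> \<open>x \<in> S\<close> open_contains_ball by blast
    ultimately show thesis
      by (intro that[of "min d1 r"]) (auto simp: dist_norm norm_minus_commute subset_iff)
  qed
  define d where "d = \<delta> / (norm u + norm v + 1)"
  have nuv: "norm u + norm v + 1 > 0"
    by (simp add: add_nonneg_pos)
  show ?thesis
  proof (intro exI[of _ d] conjI allI impI)
    show "d > 0" using \<delta> nuv by (simp add: d_def)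
    fix t assume t: "0 < t \<and> t < d"
    show "norm ((f (x + t *\<^sub>R u + t *\<^sub>R v) - f (x + t *\<^sub>R u)) - (f (x + t *\<^sub>R v) - f x)
      - (t * t) *\<^sub>R frechet_derivative (\<lambda>y. frechet_derivative f (at y) u) (at x) v) \<le> e * (t * t)"
    proof (rule second_difference_bound[OF C \<open>open S\<close>], unfold E_def[symmetric])
      show "0 \<le> t" using t by simp
      fix a b assume "a \<in> {0..t}" "b \<in> {0..t}"
      have "norm (a *\<^sub>R u + b *\<^sub>R v) \<le> a * norm u + b * norm v"
        using \<open>a \<in> {0..t}\<close> \<open>b \<in> {0..t}\<close> norm_triangle_ineq[of "a *\<^sub>R u" "b *\<^sub>R v"] by simp
      also have "\<dots> \<le> t * (norm u + norm v + 1)"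
        using \<open>a \<in> {0..t}\<close> \<open>b \<in> {0..t}\<close> by (simp add: distrib_left add_mono mult_right_mono add_increasing2)
      also have "\<dots> < \<delta>"
        using t nuv by (simp add: d_def pos_less_divide_eq)
      finally show "x + a *\<^sub>R u + b *\<^sub>R v \<in> S \<and> norm (E (x + a *\<^sub>R u + b *\<^sub>R v) - E x) \<le> e"
        by (intro \<delta>(2)) (simp add: dist_norm add.assoc)
    qed
  qed
qed

lemma frechet_derivative_second_symmetric:
  fixes f :: "'a::real_normed_vector \<Rightarrow> 'b::real_normed_vector"
  assumes C: "Ck_on (Suc (Suc 0)) S f" and S: "open S" and x: "x \<in> S"
  shows "frechet_derivative (\<lambda>y. frechet_derivative f (at y) u) (at x) v
       = frechet_derivative (\<lambda>y. frechet_derivative f (at y) v) (at x) u"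
    (is "?A = ?B")
proof -
  have "norm (?A - ?B) \<le> 0 + e" if e: "e > 0" for e
  proof -
    obtain d1 where d1: "d1 > 0" "\<And>t. 0 < t \<and> t < d1 \<Longrightarrow>
      norm ((f (x + t *\<^sub>R u + t *\<^sub>R v) - f (x + t *\<^sub>R u)) - (f (x + t *\<^sub>R v) - f x) - (t * t) *\<^sub>R ?A)
        \<le> e/2 * (t * t)"
      using second_difference_approx[OF C S x, of "e/2" u v] e by auto
    obtain d2 where d2: "d2 > 0" "\<And>t. 0 < t \<and> t < d2 \<Longrightarrow>
      norm ((f (x + t *\<^sub>R v + t *\<^sub>R u) - f (x + t *\<^sub>R v)) - (f (x + t *\<^sub>R u) - f x) - (t * t) *\<^sub>R ?B)
        \<le> e/2 * (t * t)"
      using second_difference_approx[OF C S x, of "e/2" v u] e by auto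
    define t where "t = min d1 d2 / 2"
    have t: "0 < t" "t < d1" "t < d2" using d1 d2 by (auto simp: t_def)
    define D where "D = (f (x + t *\<^sub>R u + t *\<^sub>R v) - f (x + t *\<^sub>R u)) - (f (x + t *\<^sub>R v) - f x)"
    have swap: "(f (x + t *\<^sub>R v + t *\<^sub>R u) - f (x + t *\<^sub>R v)) - (f (x + t *\<^sub>R u) - f x) = D"
      by (simp add: D_def add_ac algebra_simps)
    have DA: "norm (D - (t * t) *\<^sub>R ?A) \<le> e/2 * (t * t)"
      using d1(2)[of t] t unfolding D_def by simp
    have DB: "norm (D - (t * t) *\<^sub>R ?B) \<le> e/2 * (t * t)"
      using d2(2)[of t] t unfolding swap by simp
    have "(t * t) * norm (?A - ?B) = dist ((t * t) *\<^sub>R ?A) ((t * t) *\<^sub>R ?B)"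
      by (simp add: dist_norm flip: scaleR_diff_right)
    also have "\<dots> \<le> dist ((t * t) *\<^sub>R ?A) D + dist ((t * t) *\<^sub>R ?B) D"
      by (rule dist_triangle2)
    also have "\<dots> \<le> (t * t) * e"
      using DA DB by (simp add: dist_norm norm_minus_commute mult.commute)
    finally show ?thesis using t by simp
  qed
  then have "norm (?A - ?B) \<le> 0"
    by (rule field_le_epsilon)
  then show ?thesis by simp
qed

locale C2_family =
  fixes f h :: "real \<Rightarrow> 'a::real_normed_vector \<Rightarrow> 'b::real_normed_vector"
    and I :: "real set" and U :: "'a set"
  assumes open_I: "open I" and open_U: "open U"
    and C2: "Ck_on (Suc (Suc 0)) (I \<times> U) (\<lambda>(t, w). f t w)"
    and time_derivative: "\<And>t w. t \<in> I \<Longrightarrow> w \<in> U \<Longrightarrow> ((\<lambda>r. f r w) has_vector_derivative h t w) (at t)"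
begin

definition joint_derivative :: "real \<times> 'a \<Rightarrow> real \<times> 'a \<Rightarrow> 'b" where
  "joint_derivative q = frechet_derivative (\<lambda>(t, w). f t w) (at q)"

lemma open_domain: "open (I \<times> U)"
  using open_I open_U by (rule open_Times)

lemma has_joint_derivative:
  "q \<in> I \<times> U \<Longrightarrow> ((\<lambda>(t, w). f t w) has_derivative joint_derivative q) (at q)"
  unfolding joint_derivative_def by (rule Ck_on_2_derivatives(1)[OF C2 open_domain])

lemma slice_has_derivative:
  assumes "t \<in> I" "w \<in> U"
  shows "(f t has_derivative (\<lambda>e. joint_derivative (t, w) (0, e))) (at w)"
proof -
  have "((\<lambda>w. (t, w)) has_derivative (\<lambda>e. (0, e))) (at w)"
    by (auto intro!: derivative_eq_intros)
  moreover have "((\<lambda>(t, w). f t w) has_derivative joint_derivative (t, w)) (at (t, w))"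
    using assms by (intro has_joint_derivative) simp
  ultimately show ?thesis
    using has_derivative_compose by fastforce
qed

lemma time_derivative_eq_joint_derivative:
  assumes "t \<in> I" "w \<in> U"
  shows "h t w = joint_derivative (t, w) (1, 0)"
proof -
  have "((\<lambda>(t, w). f t w) has_derivative joint_derivative (t, w)) (at ((0, w) + t *\<^sub>R (1, 0)))"
    using assms by (simp add: has_joint_derivative)
  then have "((\<lambda>b. (\<lambda>(t, w). f t w) ((0, w) + b *\<^sub>R (1, 0))) has_vector_derivative joint_derivative (t, w) (1, 0)) (at t)"
    by (rule has_vector_derivative_along_line)
  then show ?thesis
    using vector_derivative_unique_at[OF time_derivative[OF assms]] by simp
qed

lemma variation_has_joint_derivative:
  assumes "s \<in> I" "z \<in> U"
  shows "(h s has_derivative (\<lambda>e. frechet_derivative (\<lambda>q. joint_derivative q (1, 0)) (at (s, z)) (0, e))) (at z)"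
proof -
  have "((\<lambda>q. joint_derivative q (1, 0)) has_derivative frechet_derivative (\<lambda>q. joint_derivative q (1, 0)) (at (s, z))) (at (s, z))"
    unfolding joint_derivative_def using Ck_on_2_derivatives(2)[OF C2 open_domain] assms by simp
  then have "((\<lambda>q. h (fst q) (snd q)) has_derivative frechet_derivative (\<lambda>q. joint_derivative q (1, 0)) (at (s, z))) (at (s, z))"
    by (rule has_derivative_transform_within_open[OF _ open_domain])
       (use assms in \<open>auto simp: time_derivative_eq_joint_derivative\<close>)
  moreover have "((\<lambda>w. (s, w)) has_derivative (\<lambda>e. (0, e))) (at z)"
    by (auto intro!: derivative_eq_intros)
  ultimately show ?thesis
    using has_derivative_compose by fastforce
qed

lemma slice_derivative_has_vector_derivative:
  assumes "s \<in> I" "z \<in> U"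
  shows "((\<lambda>t. joint_derivative (t, z) (0, e)) has_vector_derivative
           frechet_derivative (\<lambda>q. joint_derivative q (1, 0)) (at (s, z)) (0, e)) (at s)"
proof -
  have "((\<lambda>q. joint_derivative q (0, e)) has_derivative frechet_derivative (\<lambda>q. joint_derivative q (0, e)) (at (s, z))) (at (s, z))"
    unfolding joint_derivative_def using Ck_on_2_derivatives(2)[OF C2 open_domain] assms by simp
  then have "((\<lambda>b. joint_derivative ((0, z) + b *\<^sub>R (1, 0)) (0, e)) has_vector_derivative
      frechet_derivative (\<lambda>q. joint_derivative q (0, e)) (at (s, z)) (1, 0)) (at s)"
    by (intro has_vector_derivative_along_line) simp
  moreover have "frechet_derivative (\<lambda>q. joint_derivative q (0, e)) (at (s, z)) (1, 0)
      = frechet_derivative (\<lambda>q. joint_derivative q (1, 0)) (at (s, z)) (0, e)"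
    unfolding joint_derivative_def
    using frechet_derivative_second_symmetric[OF C2 open_domain] assms by simp
  ultimately show ?thesis by simp
qed

lemma slice_differentiable:
  "t \<in> I \<Longrightarrow> w \<in> U \<Longrightarrow> (f t has_derivative frechet_derivative (f t) (at w)) (at w)"
  using slice_has_derivative frechet_derivative_at by metis

lemma variation_differentiable:
  "s \<in> I \<Longrightarrow> z \<in> U \<Longrightarrow> (h s has_derivative frechet_derivative (h s) (at z)) (at z)"
  using variation_has_joint_derivative frechet_derivative_at by metis

theorem spatial_derivative_has_vector_derivative:
  assumes "s \<in> I" "z \<in> U"
  shows "((\<lambda>t. frechet_derivative (f t) (at z) e) has_vector_derivative
           frechet_derivative (h s) (at z) e) (at s)"
proof -
  have "frechet_derivative (h s) (at z) e = frechet_derivative (\<lambda>q. joint_derivative q (1, 0)) (at (s, z)) (0, e)"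
    by (simp flip: frechet_derivative_at[OF variation_has_joint_derivative[OF assms]])
  then have "((\<lambda>t. joint_derivative (t, z) (0, e)) has_vector_derivative frechet_derivative (h s) (at z) e) (at s)"
    using slice_derivative_has_vector_derivative[OF assms] by simp
  then show ?thesis
  proof (rule has_vector_derivative_transform_within_open[OF _ open_I \<open>s \<in> I\<close>])
    fix t assume "t \<in> I"
    show "joint_derivative (t, z) (0, e) = frechet_derivative (f t) (at z) e"
      by (simp flip: frechet_derivative_at[OF slice_has_derivative[OF \<open>t \<in> I\<close> \<open>z \<in> U\<close>]])
  qed
qed

end

section \<open>Derivative of the inverse matrix\<close>

lemma matrix_inv_right: "invertible A \<Longrightarrow> A ** matrix_inv A = mat 1"
  and matrix_inv_left: "invertible A \<Longrightarrow> matrix_inv A ** A = mat 1"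
  using someI_ex[of "\<lambda>A'. A ** A' = mat 1 \<and> A' ** A = mat 1"]
  unfolding invertible_def matrix_inv_def by auto

lemma differentiable_prod:
  fixes f :: "'i \<Rightarrow> 'a::real_normed_vector \<Rightarrow> 'b::real_normed_field"
  assumes "\<And>i. i \<in> I \<Longrightarrow> f i differentiable (at x within S)"
  shows "(\<lambda>t. \<Prod>i\<in>I. f i t) differentiable (at x within S)"
  using assms by (induction I rule: infinite_finite_induct) (auto simp: prod.insert)

lemma det_differentiable:
  fixes M :: "'a::real_normed_vector \<Rightarrow> 'b::real_normed_field^'n^'n"
  assumes "\<And>i j. (\<lambda>t. M t $ i $ j) differentiable (at x within S)"
  shows "(\<lambda>t. det (M t)) differentiable (at x within S)"
  unfolding det_def
  by (intro differentiable_sum ballI differentiable_mult differentiable_const differentiable_prod)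
     (auto simp: assms)

lemma matrix_inv_entry_differentiable:
  fixes A :: "real \<Rightarrow> 'a::real_normed_field^'n^'n"
  assumes "open I" "s \<in> I" and invertible: "\<And>t. t \<in> I \<Longrightarrow> invertible (A t)"
    and entries: "\<And>i j. (\<lambda>t. A t $ i $ j) differentiable (at s)"
  shows "(\<lambda>t. matrix_inv (A t) $ k $ l) differentiable (at s)"
proof -
  define C where "C t = (\<chi> i j. if j = k then axis l 1 $ i else A t $ i $ j)" for t
  have cramer_entry: "matrix_inv (A t) $ k $ l = det (C t) / det (A t)" if "t \<in> I" for t
  proof -
    have "A t *v (matrix_inv (A t) *v axis l 1) = axis l 1"
      by (simp add: matrix_vector_mul_assoc matrix_inv_right[OF invertible[OF that]])
    then have "matrix_inv (A t) *v axis l 1 = (\<chi> k. det (\<chi> i j. if j = k then axis l 1 $ i else A t $ i $ j) / det (A t))"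
      using cramer invertible[OF that] invertible_det_nz by blast
    moreover have "(matrix_inv (A t) *v axis l 1) $ k = matrix_inv (A t) $ k $ l"
      by (simp add: matrix_vector_mult_def axis_def if_distrib cong: if_cong)
    ultimately show ?thesis by (simp add: C_def)
  qed
  have "(\<lambda>t. C t $ i $ j) differentiable (at s)" for i j
    by (cases "j = k") (auto simp: C_def entries)
  then have "(\<lambda>t. det (C t) / det (A t)) differentiable (at s)"
    using invertible[OF \<open>s \<in> I\<close>] invertible_det_nz entries
    by (intro differentiable_divide det_differentiable) auto
  then obtain D where "((\<lambda>t. det (C t) / det (A t)) has_derivative D) (at s)"
    unfolding differentiable_def by blast
  then have "((\<lambda>t. matrix_inv (A t) $ k $ l) has_derivative D) (at s)"
    by (rule has_derivative_transform_within_open[OF _ assms(1,2)]) (simp add: cramer_entry)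
  then show ?thesis unfolding differentiable_def by blast
qed

lemma has_vector_derivative_matrix_inv:
  fixes A :: "real \<Rightarrow> 'a::real_normed_field^'n^'n"
  assumes "open I" "s \<in> I" and invertible: "\<And>t. t \<in> I \<Longrightarrow> invertible (A t)"
    and A': "\<And>i j. ((\<lambda>t. A t $ i $ j) has_vector_derivative A' $ i $ j) (at s)"
  shows "((\<lambda>t. matrix_inv (A t) $ k $ l) has_vector_derivative
     - (\<Sum>x\<in>UNIV. \<Sum>y\<in>UNIV. matrix_inv (A s) $ k $ x * A' $ x $ y * matrix_inv (A s) $ y $ l)) (at s)"
proof -
  define N where "N t = matrix_inv (A t)" for t
  define N' where "N' = (\<chi> k l. vector_derivative (\<lambda>t. N t $ k $ l) (at s))"
  have N': "((\<lambda>t. N t $ k $ l) has_vector_derivative N' $ k $ l) (at s)" for k l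
    unfolding N'_def N_def
    using matrix_inv_entry_differentiable[OF assms(1,2) invertible differentiableI_vector[OF A']]
    by (simp add: vector_derivative_works[symmetric])
  have "N' ** A s + N s ** A' = 0"
  proof -
    have "((\<lambda>t. (N t ** A t) $ k $ j) has_vector_derivative (N' ** A s + N s ** A') $ k $ j) (at s)" for k j
      unfolding matrix_matrix_mult_def
      by (auto intro!: derivative_eq_intros N' A' simp: sum.distrib)
    moreover have "((\<lambda>t. (N t ** A t) $ k $ j) has_vector_derivative 0) (at s)" for k j
      by (rule has_vector_derivative_transform_within_open[of "\<lambda>_. mat 1 $ k $ j" _ _ I])
         (use assms(1,2) in \<open>auto simp: N_def matrix_inv_left invertible\<close>)
    ultimately show ?thesis
      using vector_derivative_unique_at by (simp add: vec_eq_iff) blast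
  qed
  then have "N' ** A s = - (N s ** A')"
    by (simp add: eq_neg_iff_add_eq_0)
  moreover have "N' = (N' ** A s) ** N s"
    using matrix_inv_right[OF invertible[OF \<open>s \<in> I\<close>]] by (simp add: N_def flip: matrix_mul_assoc)
  ultimately have "N' $ k $ l = (- (N s ** A') ** N s) $ k $ l"
    by simp
  also have "\<dots> = - (\<Sum>y\<in>UNIV. \<Sum>x\<in>UNIV. N s $ k $ x * A' $ x $ y * N s $ y $ l)"
    by (simp add: matrix_matrix_mult_def sum_distrib_right sum_negf)
  also have "\<dots> = - (\<Sum>x\<in>UNIV. \<Sum>y\<in>UNIV. N s $ k $ x * A' $ x $ y * N s $ y $ l)"
    by (subst sum.swap) (rule refl)
  finally show ?thesis
    using N'[of k l] by (simp add: N_def)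
qed

section \<open>Hermitian matrices and Wirtinger derivatives\<close>

lemma hermitian_metric_invertible:
  fixes M :: "complex^'n^'n"
  assumes "hermitian_metric_at M"
  shows "invertible (transpose M)"
proof -
  have "x = 0" if "transpose M *v x = 0" for x :: "complex^'n"
  proof (rule ccontr)
    assume "x \<noteq> 0"
    then have "0 < Re (\<Sum>i\<in>UNIV. \<Sum>j\<in>UNIV. M $ i $ j * x $ i * cnj (x $ j))"
      using assms unfolding hermitian_metric_at_def by blast
    also have "(\<Sum>i\<in>UNIV. \<Sum>j\<in>UNIV. M $ i $ j * x $ i * cnj (x $ j))
        = (\<Sum>j\<in>UNIV. cnj (x $ j) * (transpose M *v x) $ j)"
      by (subst sum.swap) (simp add: matrix_vector_mult_def transpose_def sum_distrib_left mult_ac)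
    finally show False
      using that by simp
  qed
  then show ?thesis
    using invertible_left_inverse matrix_left_invertible_ker by blast
qed

lemma cnj_matrix_inv_hermitian:
  fixes A :: "complex^'n^'n"
  assumes hermitian: "\<And>i j. A $ j $ i = cnj (A $ i $ j)" and "invertible A"
  shows "cnj (matrix_inv A $ a $ b) = matrix_inv A $ b $ a"
proof -
  define N where "N = matrix_inv A"
  define N_adj where "N_adj = (\<chi> i j. cnj (N $ j $ i))"
  have "(A ** N_adj) $ i $ j = cnj ((N ** A) $ j $ i)" for i j
    by (simp add: N_adj_def matrix_matrix_mult_def hermitian[of _ i] mult.commute)
  then have "A ** N_adj = mat 1"
    using matrix_inv_left[OF \<open>invertible A\<close>] by (simp add: N_def vec_eq_iff mat_def)
  then have "N_adj = N"
    by (metis N_def \<open>invertible A\<close> matrix_inv_left matrix_mul_assoc matrix_mul_lid matrix_mul_rid)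
  then show ?thesis
    by (metis N_adj_def N_def vec_lambda_beta)
qed

lemma has_derivative_matrix_entry:
  "(\<Phi> has_derivative \<Phi>') F \<Longrightarrow> ((\<lambda>w. \<Phi> w $ j $ k) has_derivative (\<lambda>e. \<Phi>' e $ j $ k)) F"
  by (rule bounded_linear.has_derivative[OF bounded_linear_vec_nth
        bounded_linear.has_derivative[OF bounded_linear_vec_nth]])

lemma has_vector_derivative_matrix_entry:
  "(\<Phi> has_vector_derivative \<Phi>') F \<Longrightarrow> ((\<lambda>t. \<Phi> t $ j $ k) has_vector_derivative \<Phi>' $ j $ k) F"
  by (rule bounded_linear.has_vector_derivative[OF bounded_linear_vec_nth
        bounded_linear.has_vector_derivative[OF bounded_linear_vec_nth]])

lemma cnj_ginv:
  assumes "hermitian_metric_at (G z)"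
  shows "cnj (ginv G z $ a $ b) = ginv G z $ b $ a"
proof -
  have "G z $ i $ j = cnj (G z $ j $ i)" for i j
    using assms unfolding hermitian_metric_at_def by blast
  then have "transpose (G z) $ j $ i = cnj (transpose (G z) $ i $ j)" for i j
    unfolding transpose_def vec_lambda_beta .
  then show ?thesis
    unfolding ginv_def using hermitian_metric_invertible[OF assms]
    by (rule cnj_matrix_inv_hermitian)
qed

lemma has_vector_derivative_hermitian:
  fixes M :: "real \<Rightarrow> complex^'n^'n"
  assumes "open I" "s \<in> I" and hermitian: "\<And>t i j. t \<in> I \<Longrightarrow> M t $ j $ i = cnj (M t $ i $ j)"
    and M': "(M has_vector_derivative M') (at s)"
  shows "M' $ j $ i = cnj (M' $ i $ j)"
proof -
  have "((\<lambda>t. M t $ j $ i) has_vector_derivative M' $ j $ i) (at s)"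
    using M' by (rule has_vector_derivative_matrix_entry)
  moreover have "((\<lambda>t. M t $ j $ i) has_vector_derivative cnj (M' $ i $ j)) (at s)"
    using has_vector_derivative_cnj[OF has_vector_derivative_matrix_entry[OF M']]
    by (rule has_vector_derivative_transform_within_open[OF _ assms(1,2)])
       (rule hermitian[symmetric])
  ultimately show ?thesis
    by (rule vector_derivative_unique_at)
qed

lemma dz_matrix_entry:
  assumes "(\<Phi> has_derivative \<Phi>') (at z)"
  shows "dz (\<lambda>w. \<Phi> w $ j $ k) i z = (\<Phi>' (axis i 1) $ j $ k - \<i> * \<Phi>' (axis i \<i>) $ j $ k) / 2"
  by (simp add: dz_def flip: frechet_derivative_at[OF has_derivative_matrix_entry[OF assms]])

lemma dzb_eq_cnj_dz:
  assumes "open U" "z \<in> U" and conj: "\<And>w. w \<in> U \<Longrightarrow> f w = cnj (g w)"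
    and "g differentiable (at z)"
  shows "dzb f i z = cnj (dz g i z)"
proof -
  define g' where "g' = frechet_derivative g (at z)"
  have "(g has_derivative g') (at z)"
    unfolding g'_def using \<open>g differentiable (at z)\<close> by (simp add: frechet_derivative_works)
  then have "((\<lambda>w. cnj (g w)) has_derivative (\<lambda>e. cnj (g' e))) (at z)"
    by (rule bounded_linear.has_derivative[OF bounded_linear_cnj])
  then have "(f has_derivative (\<lambda>e. cnj (g' e))) (at z)"
    by (rule has_derivative_transform_within_open[OF _ assms(1,2)]) (simp add: conj)
  then have "frechet_derivative f (at z) = (\<lambda>e. cnj (g' e))"
    by (rule frechet_derivative_at[symmetric])
  then show ?thesis
    by (simp add: dzb_def dz_def g'_def)
qed

section \<open>Index calculus for the variation of the torsion\<close>

definition tensor_pairing :: "('n::finite \<Rightarrow> 'n \<Rightarrow> complex) \<Rightarrow> ('n \<Rightarrow> 'n \<Rightarrow> complex) \<Rightarrow> ('n \<Rightarrow> 'n \<Rightarrow> complex)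
    \<Rightarrow> ('n \<Rightarrow> 'n \<Rightarrow> 'n \<Rightarrow> complex) \<Rightarrow> ('n \<Rightarrow> 'n \<Rightarrow> 'n \<Rightarrow> complex) \<Rightarrow> complex" where
  "tensor_pairing A B C X Y = (\<Sum>i\<in>UNIV. \<Sum>j\<in>UNIV. \<Sum>k\<in>UNIV. \<Sum>p\<in>UNIV. \<Sum>q\<in>UNIV. \<Sum>r\<in>UNIV.
      A i p * B j q * C r k * X i j k * cnj (Y p q r))"

lemma normT2_eq_tensor_pairing:
  "normT2 G z = tensor_pairing (\<lambda>a b. ginv G z $ a $ b) (\<lambda>a b. ginv G z $ a $ b) (\<lambda>a b. ginv G z $ a $ b)
     (\<lambda>i j k. tor G i j k z) (\<lambda>i j k. tor G i j k z)"
  by (simp add: normT2_def tensor_pairing_def)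

lemma has_vector_derivative_tensor_pairing:
  assumes "\<And>a b. ((\<lambda>t. A t a b) has_vector_derivative A' a b) (at s)"
    and "\<And>a b. ((\<lambda>t. B t a b) has_vector_derivative B' a b) (at s)"
    and "\<And>a b. ((\<lambda>t. C t a b) has_vector_derivative C' a b) (at s)"
    and "\<And>i j k. ((\<lambda>t. X t i j k) has_vector_derivative X' i j k) (at s)"
    and "\<And>i j k. ((\<lambda>t. Y t i j k) has_vector_derivative Y' i j k) (at s)"
  shows "((\<lambda>t. tensor_pairing (A t) (B t) (C t) (X t) (Y t)) has_vector_derivative
      tensor_pairing A' (B s) (C s) (X s) (Y s) + tensor_pairing (A s) B' (C s) (X s) (Y s)
    + tensor_pairing (A s) (B s) C' (X s) (Y s) + tensor_pairing (A s) (B s) (C s) X' (Y s)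
    + tensor_pairing (A s) (B s) (C s) (X s) Y') (at s)"
  unfolding tensor_pairing_def sum.distrib[symmetric]
  by (rule has_vector_derivative_eq_rhs,
      (rule has_vector_derivative_sum has_vector_derivative_mult has_vector_derivative_cnj assms)+)
     (intro sum.cong refl, simp add: algebra_simps)

lemma sum_nested_6_eq_sum_tuple:
  "(\<Sum>a\<in>UNIV. \<Sum>b\<in>UNIV. \<Sum>c\<in>UNIV. \<Sum>d\<in>UNIV. \<Sum>e\<in>UNIV. \<Sum>f\<in>UNIV. P a b c d e f)
   = (\<Sum>(a, b, c, d, e, f)\<in>UNIV. P a b c d e f)"
  by (simp add: sum.cartesian_product)

lemma sum_nested_8_eq_sum_tuple:
  "(\<Sum>a\<in>UNIV. \<Sum>b\<in>UNIV. \<Sum>c\<in>UNIV. \<Sum>d\<in>UNIV. \<Sum>e\<in>UNIV. \<Sum>f\<in>UNIV. \<Sum>g\<in>UNIV. \<Sum>h\<in>UNIV. P a b c d e f g h)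
   = (\<Sum>(a, b, c, d, e, f, g, h)\<in>UNIV. P a b c d e f g h)"
  by (simp add: sum.cartesian_product)

text \<open>
  The parameters stand for quantities at a fixed point: N a b = g^{a\bar b}, H a b = h_{a\bar b},
  T i j k = T_{ij\bar k}, dh i j k = \partial_i h_{j\bar k} and G i j k = \Gamma_{ij}^k.
  Then dN and dT are the s-derivatives of g^{-1} and T, pair_h A = <h,A>, pair_nabla_h = <\nabla h,T>,
  and nabla_h i k n, nabla_bar_h j l m are \nabla_i h_{k\bar n} and \nabla_{\bar j} h_{\bar l m}.
\<close>
locale torsion_variation =
  fixes N H :: "'n::finite \<Rightarrow> 'n \<Rightarrow> complex" and T dh G :: "'n \<Rightarrow> 'n \<Rightarrow> 'n \<Rightarrow> complex"
  assumes torsion_antisym: "T j i k = - T i j k"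
    and christoffel_skew: "G i j a - G j i a = (\<Sum>l\<in>UNIV. N a l * T i j l)"
    and inverse_hermitian: "cnj (N a b) = N b a"
begin

definition dN :: "'n \<Rightarrow> 'n \<Rightarrow> complex" where
  "dN i p = - (\<Sum>x\<in>UNIV. \<Sum>y\<in>UNIV. N i x * H y x * N y p)"

definition dT :: "'n \<Rightarrow> 'n \<Rightarrow> 'n \<Rightarrow> complex" where
  "dT i j k = dh i j k - dh j i k"

definition torsion_Q1 :: "'n \<Rightarrow> 'n \<Rightarrow> complex" where
  "torsion_Q1 i j = (\<Sum>k\<in>UNIV. \<Sum>l\<in>UNIV. \<Sum>m\<in>UNIV. \<Sum>n\<in>UNIV. N k l * N m n * T i k n * cnj (T j l m))"

definition torsion_Q2 :: "'n \<Rightarrow> 'n \<Rightarrow> complex" where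
  "torsion_Q2 i j = (\<Sum>k\<in>UNIV. \<Sum>l\<in>UNIV. \<Sum>m\<in>UNIV. \<Sum>n\<in>UNIV. N k l * N m n * cnj (T l n i) * T k m j)"

definition pair_h :: "('n \<Rightarrow> 'n \<Rightarrow> complex) \<Rightarrow> complex" where
  "pair_h A = (\<Sum>a\<in>UNIV. \<Sum>b\<in>UNIV. \<Sum>c\<in>UNIV. \<Sum>d\<in>UNIV. N a d * N c b * H c d * A a b)"

definition nabla_h :: "'n \<Rightarrow> 'n \<Rightarrow> 'n \<Rightarrow> complex" where
  "nabla_h i k n = dh i k n - (\<Sum>p\<in>UNIV. G i k p * H p n)"

definition nabla_bar_h :: "'n \<Rightarrow> 'n \<Rightarrow> 'n \<Rightarrow> complex" where
  "nabla_bar_h j l m = cnj (dh j l m) - (\<Sum>q\<in>UNIV. cnj (G j l q) * H m q)"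

definition pair_nabla_h :: complex where
  "pair_nabla_h = 1/2 * (\<Sum>i\<in>UNIV. \<Sum>j\<in>UNIV. \<Sum>k\<in>UNIV. \<Sum>l\<in>UNIV. \<Sum>m\<in>UNIV. \<Sum>n\<in>UNIV.
      N i j * N k l * N m n * (nabla_h i k n * cnj (T j l m) + T i k n * nabla_bar_h j l m))"

definition pair_nabla_h_T :: complex where
  "pair_nabla_h_T = (\<Sum>i\<in>UNIV. \<Sum>j\<in>UNIV. \<Sum>k\<in>UNIV. \<Sum>l\<in>UNIV. \<Sum>m\<in>UNIV. \<Sum>n\<in>UNIV.
      N i j * N k l * N m n * (nabla_h i k n * cnj (T j l m)))"

definition pair_T_nabla_bar_h :: complex where
  "pair_T_nabla_bar_h = (\<Sum>i\<in>UNIV. \<Sum>j\<in>UNIV. \<Sum>k\<in>UNIV. \<Sum>l\<in>UNIV. \<Sum>m\<in>UNIV. \<Sum>n\<in>UNIV.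
      N i j * N k l * N m n * (T i k n * nabla_bar_h j l m))"

lemma pair_h_torsion_Q1_expand:
  "pair_h torsion_Q1 = (\<Sum>a\<in>UNIV. \<Sum>b\<in>UNIV. \<Sum>c\<in>UNIV. \<Sum>d\<in>UNIV. \<Sum>k\<in>UNIV. \<Sum>l\<in>UNIV. \<Sum>m\<in>UNIV. \<Sum>n\<in>UNIV.
      N a d * N c b * H c d * (N k l * N m n * T a k n * cnj (T b l m)))"
  unfolding pair_h_def torsion_Q1_def by (simp add: sum_distrib_left)

lemma pair_h_torsion_Q2_expand:
  "pair_h torsion_Q2 = (\<Sum>a\<in>UNIV. \<Sum>b\<in>UNIV. \<Sum>c\<in>UNIV. \<Sum>d\<in>UNIV. \<Sum>k\<in>UNIV. \<Sum>l\<in>UNIV. \<Sum>m\<in>UNIV. \<Sum>n\<in>UNIV.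
      N a d * N c b * H c d * (N k l * N m n * cnj (T l n a) * T k m b))"
  unfolding pair_h_def torsion_Q2_def by (simp add: sum_distrib_left)

lemma tensor_pairing_dN_first: "tensor_pairing dN N N T T = - pair_h torsion_Q1"
proof -
  have "tensor_pairing dN N N T T
    = - (\<Sum>i\<in>UNIV. \<Sum>j\<in>UNIV. \<Sum>k\<in>UNIV. \<Sum>p\<in>UNIV. \<Sum>q\<in>UNIV. \<Sum>r\<in>UNIV. \<Sum>x\<in>UNIV. \<Sum>y\<in>UNIV.
      N i x * H y x * N y p * N j q * N r k * T i j k * cnj (T p q r))"
    by (simp add: tensor_pairing_def dN_def sum_distrib_right sum_negf)
  also have "(\<Sum>i\<in>UNIV. \<Sum>j\<in>UNIV. \<Sum>k\<in>UNIV. \<Sum>p\<in>UNIV. \<Sum>q\<in>UNIV. \<Sum>r\<in>UNIV. \<Sum>x\<in>UNIV. \<Sum>y\<in>UNIV.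
      N i x * H y x * N y p * N j q * N r k * T i j k * cnj (T p q r)) = pair_h torsion_Q1"
    unfolding pair_h_torsion_Q1_expand sum_nested_8_eq_sum_tuple
    by (rule sum.reindex_bij_witness[where i="\<lambda>(a,b,c,d,k,l,m,n). (a,k,n,b,l,m,d,c)"
                                         and j="\<lambda>(i,j,k,p,q,r,x,y). (i,p,y,x,j,q,r,k)"])
       (auto simp: mult_ac)
  finally show ?thesis .
qed

lemma tensor_pairing_swap_first_two: "tensor_pairing A B C T T = tensor_pairing B A C T T"
proof -
  have "tensor_pairing A B C T T = (\<Sum>i\<in>UNIV. \<Sum>j\<in>UNIV. \<Sum>k\<in>UNIV. \<Sum>p\<in>UNIV. \<Sum>q\<in>UNIV. \<Sum>r\<in>UNIV.
      A i p * B j q * C r k * T j i k * cnj (T q p r))"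
  proof -
    have swap: "P * T i j k * cnj (T p q r) = P * T j i k * cnj (T q p r)" for P i j k p q r
      using torsion_antisym[of i j k] torsion_antisym[of p q r] by simp
    show ?thesis
      unfolding tensor_pairing_def by (intro sum.cong refl) (rule swap)
  qed
  also have "\<dots> = tensor_pairing B A C T T"
    unfolding tensor_pairing_def sum_nested_6_eq_sum_tuple
    by (rule sum.reindex_bij_witness[where i="\<lambda>(i,j,k,p,q,r). (j,i,k,q,p,r)"
                                         and j="\<lambda>(i,j,k,p,q,r). (j,i,k,q,p,r)"])
       (auto simp: mult_ac)
  finally show ?thesis .
qed

lemma tensor_pairing_dN_second: "tensor_pairing N dN N T T = - pair_h torsion_Q1"
  using tensor_pairing_dN_first tensor_pairing_swap_first_two by simp

lemma tensor_pairing_dN_third: "tensor_pairing N N dN T T = - pair_h torsion_Q2"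
proof -
  have "tensor_pairing N N dN T T
    = - (\<Sum>i\<in>UNIV. \<Sum>j\<in>UNIV. \<Sum>k\<in>UNIV. \<Sum>p\<in>UNIV. \<Sum>q\<in>UNIV. \<Sum>r\<in>UNIV. \<Sum>x\<in>UNIV. \<Sum>y\<in>UNIV.
      N i p * N j q * N r x * H y x * N y k * T i j k * cnj (T p q r))"
    by (simp add: tensor_pairing_def dN_def sum_distrib_right sum_distrib_left sum_negf mult_ac)
  also have "(\<Sum>i\<in>UNIV. \<Sum>j\<in>UNIV. \<Sum>k\<in>UNIV. \<Sum>p\<in>UNIV. \<Sum>q\<in>UNIV. \<Sum>r\<in>UNIV. \<Sum>x\<in>UNIV. \<Sum>y\<in>UNIV.
      N i p * N j q * N r x * H y x * N y k * T i j k * cnj (T p q r)) = pair_h torsion_Q2"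
    unfolding pair_h_torsion_Q2_expand sum_nested_8_eq_sum_tuple
    by (rule sum.reindex_bij_witness[where i="\<lambda>(a,b,c,d,k,l,m,n). (k,m,b,l,n,a,d,c)"
                                         and j="\<lambda>(i,j,k,p,q,r,x,y). (r,k,y,x,i,p,j,q)"])
       (auto simp: mult_ac)
  finally show ?thesis .
qed

lemma dT_eq_nabla_h:
  "dT i j k = nabla_h i j k - nabla_h j i k + (\<Sum>x\<in>UNIV. \<Sum>l\<in>UNIV. N x l * T i j l * H x k)"
proof -
  have "(\<Sum>p\<in>UNIV. G i j p * H p k) - (\<Sum>p\<in>UNIV. G j i p * H p k) = (\<Sum>p\<in>UNIV. (G i j p - G j i p) * H p k)"
    by (simp add: sum_subtractf left_diff_distrib)
  also have "\<dots> = (\<Sum>x\<in>UNIV. \<Sum>l\<in>UNIV. N x l * T i j l * H x k)"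
    by (simp add: christoffel_skew sum_distrib_right)
  finally show ?thesis
    unfolding dT_def nabla_h_def by (simp add: algebra_simps)
qed

lemma cnj_dT_eq_nabla_bar_h:
  "cnj (dT p q r) = nabla_bar_h p q r - nabla_bar_h q p r + (\<Sum>x\<in>UNIV. \<Sum>a\<in>UNIV. N a x * cnj (T p q a) * H r x)"
proof -
  have "(\<Sum>x\<in>UNIV. cnj (G p q x) * H r x) - (\<Sum>x\<in>UNIV. cnj (G q p x) * H r x)
      = (\<Sum>x\<in>UNIV. cnj (G p q x - G q p x) * H r x)"
    by (simp add: sum_subtractf left_diff_distrib)
  also have "\<dots> = (\<Sum>x\<in>UNIV. \<Sum>a\<in>UNIV. N a x * cnj (T p q a) * H r x)"
    by (simp add: christoffel_skew cnj_sum inverse_hermitian sum_distrib_right)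
  finally show ?thesis
    unfolding dT_def nabla_bar_h_def by (simp add: algebra_simps)
qed

lemma torsion_h_term_eq_pair_h_Q2:
  "(\<Sum>i\<in>UNIV. \<Sum>j\<in>UNIV. \<Sum>k\<in>UNIV. \<Sum>p\<in>UNIV. \<Sum>q\<in>UNIV. \<Sum>r\<in>UNIV.
      N i p * N j q * N r k * (\<Sum>x\<in>UNIV. \<Sum>l\<in>UNIV. N x l * T i j l * H x k) * cnj (T p q r))
    = pair_h torsion_Q2"
proof -
  have "(\<Sum>i\<in>UNIV. \<Sum>j\<in>UNIV. \<Sum>k\<in>UNIV. \<Sum>p\<in>UNIV. \<Sum>q\<in>UNIV. \<Sum>r\<in>UNIV.
      N i p * N j q * N r k * (\<Sum>x\<in>UNIV. \<Sum>l\<in>UNIV. N x l * T i j l * H x k) * cnj (T p q r))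
    = (\<Sum>i\<in>UNIV. \<Sum>j\<in>UNIV. \<Sum>k\<in>UNIV. \<Sum>p\<in>UNIV. \<Sum>q\<in>UNIV. \<Sum>r\<in>UNIV. \<Sum>x\<in>UNIV. \<Sum>l\<in>UNIV.
      N i p * N j q * N r k * N x l * T i j l * H x k * cnj (T p q r))"
    by (simp add: sum_distrib_right sum_distrib_left mult_ac)
  also have "\<dots> = pair_h torsion_Q2"
    unfolding pair_h_torsion_Q2_expand sum_nested_8_eq_sum_tuple
    by (rule sum.reindex_bij_witness[where i="\<lambda>(a,b,c,d,k,l,m,n). (k,m,d,l,n,a,c,b)"
                                         and j="\<lambda>(i,j,k,p,q,r,x,l). (r,l,x,k,i,p,j,q)"])
       (auto simp: mult_ac)
  finally show ?thesis .
qed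

lemma tensor_pairing_dT_left: "tensor_pairing N N N dT T = 2 * pair_nabla_h_T + pair_h torsion_Q2"
proof -
  have first: "(\<Sum>i\<in>UNIV. \<Sum>j\<in>UNIV. \<Sum>k\<in>UNIV. \<Sum>p\<in>UNIV. \<Sum>q\<in>UNIV. \<Sum>r\<in>UNIV.
      N i p * N j q * N r k * nabla_h i j k * cnj (T p q r)) = pair_nabla_h_T"
    unfolding pair_nabla_h_T_def sum_nested_6_eq_sum_tuple
    by (rule sum.reindex_bij_witness[where i="\<lambda>(i,j,k,l,m,n). (i,k,n,j,l,m)"
                                         and j="\<lambda>(i,j,k,p,q,r). (i,p,j,q,r,k)"])
       (auto simp: mult_ac)
  have swap: "P * cnj (T p q r) = - (P * cnj (T q p r))" for P p q r
    using torsion_antisym[of q p r] by simp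
  have "(\<Sum>i\<in>UNIV. \<Sum>j\<in>UNIV. \<Sum>k\<in>UNIV. \<Sum>p\<in>UNIV. \<Sum>q\<in>UNIV. \<Sum>r\<in>UNIV.
      N i p * N j q * N r k * nabla_h j i k * cnj (T p q r))
    = - (\<Sum>i\<in>UNIV. \<Sum>j\<in>UNIV. \<Sum>k\<in>UNIV. \<Sum>p\<in>UNIV. \<Sum>q\<in>UNIV. \<Sum>r\<in>UNIV.
      N i p * N j q * N r k * nabla_h j i k * cnj (T q p r))"
    unfolding sum_negf[symmetric] by (intro sum.cong refl) (rule swap)
  also have "(\<Sum>i\<in>UNIV. \<Sum>j\<in>UNIV. \<Sum>k\<in>UNIV. \<Sum>p\<in>UNIV. \<Sum>q\<in>UNIV. \<Sum>r\<in>UNIV.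
      N i p * N j q * N r k * nabla_h j i k * cnj (T q p r)) = pair_nabla_h_T"
    unfolding pair_nabla_h_T_def sum_nested_6_eq_sum_tuple
    by (rule sum.reindex_bij_witness[where i="\<lambda>(i,j,k,l,m,n). (k,i,n,l,j,m)"
                                         and j="\<lambda>(i,j,k,p,q,r). (j,q,i,p,r,k)"])
       (auto simp: mult_ac)
  finally have second: "(\<Sum>i\<in>UNIV. \<Sum>j\<in>UNIV. \<Sum>k\<in>UNIV. \<Sum>p\<in>UNIV. \<Sum>q\<in>UNIV. \<Sum>r\<in>UNIV.
      N i p * N j q * N r k * nabla_h j i k * cnj (T p q r)) = - pair_nabla_h_T" .
  have "tensor_pairing N N N dT T = (\<Sum>i\<in>UNIV. \<Sum>j\<in>UNIV. \<Sum>k\<in>UNIV. \<Sum>p\<in>UNIV. \<Sum>q\<in>UNIV. \<Sum>r\<in>UNIV.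
      N i p * N j q * N r k * nabla_h i j k * cnj (T p q r) - N i p * N j q * N r k * nabla_h j i k * cnj (T p q r)
      + N i p * N j q * N r k * (\<Sum>x\<in>UNIV. \<Sum>l\<in>UNIV. N x l * T i j l * H x k) * cnj (T p q r))"
    unfolding tensor_pairing_def by (intro sum.cong refl) (simp only: dT_eq_nabla_h algebra_simps)
  also have "\<dots> = pair_nabla_h_T - (- pair_nabla_h_T) + pair_h torsion_Q2"
    by (simp only: sum.distrib sum_subtractf first second torsion_h_term_eq_pair_h_Q2)
  finally show ?thesis by simp
qed

lemma torsion_h_term_cnj_eq_pair_h_Q2:
  "(\<Sum>i\<in>UNIV. \<Sum>j\<in>UNIV. \<Sum>k\<in>UNIV. \<Sum>p\<in>UNIV. \<Sum>q\<in>UNIV. \<Sum>r\<in>UNIV.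
      N i p * N j q * N r k * T i j k * (\<Sum>x\<in>UNIV. \<Sum>a\<in>UNIV. N a x * cnj (T p q a) * H r x))
    = pair_h torsion_Q2"
proof -
  have "(\<Sum>i\<in>UNIV. \<Sum>j\<in>UNIV. \<Sum>k\<in>UNIV. \<Sum>p\<in>UNIV. \<Sum>q\<in>UNIV. \<Sum>r\<in>UNIV.
      N i p * N j q * N r k * T i j k * (\<Sum>x\<in>UNIV. \<Sum>a\<in>UNIV. N a x * cnj (T p q a) * H r x))
    = (\<Sum>i\<in>UNIV. \<Sum>j\<in>UNIV. \<Sum>k\<in>UNIV. \<Sum>p\<in>UNIV. \<Sum>q\<in>UNIV. \<Sum>r\<in>UNIV. \<Sum>x\<in>UNIV. \<Sum>a\<in>UNIV.
      N i p * N j q * N r k * T i j k * N a x * cnj (T p q a) * H r x)"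
    by (simp add: sum_distrib_right sum_distrib_left mult_ac)
  also have "\<dots> = pair_h torsion_Q2"
    unfolding pair_h_torsion_Q2_expand sum_nested_8_eq_sum_tuple
    by (rule sum.reindex_bij_witness[where i="\<lambda>(a,b,c,d,k,l,m,n). (k,m,b,l,n,c,d,a)"
                                         and j="\<lambda>(i,j,k,p,q,r,x,a). (a,k,r,x,i,p,j,q)"])
       (auto simp: mult_ac)
  finally show ?thesis .
qed

lemma tensor_pairing_dT_right: "tensor_pairing N N N T dT = 2 * pair_T_nabla_bar_h + pair_h torsion_Q2"
proof -
  have first: "(\<Sum>i\<in>UNIV. \<Sum>j\<in>UNIV. \<Sum>k\<in>UNIV. \<Sum>p\<in>UNIV. \<Sum>q\<in>UNIV. \<Sum>r\<in>UNIV.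
      N i p * N j q * N r k * T i j k * nabla_bar_h p q r) = pair_T_nabla_bar_h"
    unfolding pair_T_nabla_bar_h_def sum_nested_6_eq_sum_tuple
    by (rule sum.reindex_bij_witness[where i="\<lambda>(i,j,k,l,m,n). (i,k,n,j,l,m)"
                                         and j="\<lambda>(i,j,k,p,q,r). (i,p,j,q,r,k)"])
       (auto simp: mult_ac)
  have swap: "P * T i j k * Q = - (P * T j i k * Q)" for P Q i j k
    using torsion_antisym[of j i k] by simp
  have "(\<Sum>i\<in>UNIV. \<Sum>j\<in>UNIV. \<Sum>k\<in>UNIV. \<Sum>p\<in>UNIV. \<Sum>q\<in>UNIV. \<Sum>r\<in>UNIV.
      N i p * N j q * N r k * T i j k * nabla_bar_h q p r)
    = - (\<Sum>i\<in>UNIV. \<Sum>j\<in>UNIV. \<Sum>k\<in>UNIV. \<Sum>p\<in>UNIV. \<Sum>q\<in>UNIV. \<Sum>r\<in>UNIV.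
      N i p * N j q * N r k * T j i k * nabla_bar_h q p r)"
    unfolding sum_negf[symmetric] by (intro sum.cong refl) (rule swap)
  also have "(\<Sum>i\<in>UNIV. \<Sum>j\<in>UNIV. \<Sum>k\<in>UNIV. \<Sum>p\<in>UNIV. \<Sum>q\<in>UNIV. \<Sum>r\<in>UNIV.
      N i p * N j q * N r k * T j i k * nabla_bar_h q p r) = pair_T_nabla_bar_h"
    unfolding pair_T_nabla_bar_h_def sum_nested_6_eq_sum_tuple
    by (rule sum.reindex_bij_witness[where i="\<lambda>(i,j,k,l,m,n). (k,i,n,l,j,m)"
                                         and j="\<lambda>(i,j,k,p,q,r). (j,q,i,p,r,k)"])
       (auto simp: mult_ac)
  finally have second: "(\<Sum>i\<in>UNIV. \<Sum>j\<in>UNIV. \<Sum>k\<in>UNIV. \<Sum>p\<in>UNIV. \<Sum>q\<in>UNIV. \<Sum>r\<in>UNIV.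
      N i p * N j q * N r k * T i j k * nabla_bar_h q p r) = - pair_T_nabla_bar_h" .
  have "tensor_pairing N N N T dT = (\<Sum>i\<in>UNIV. \<Sum>j\<in>UNIV. \<Sum>k\<in>UNIV. \<Sum>p\<in>UNIV. \<Sum>q\<in>UNIV. \<Sum>r\<in>UNIV.
      N i p * N j q * N r k * T i j k * nabla_bar_h p q r - N i p * N j q * N r k * T i j k * nabla_bar_h q p r
      + N i p * N j q * N r k * T i j k * (\<Sum>x\<in>UNIV. \<Sum>a\<in>UNIV. N a x * cnj (T p q a) * H r x))"
    unfolding tensor_pairing_def by (intro sum.cong refl) (simp only: cnj_dT_eq_nabla_bar_h algebra_simps)
  also have "\<dots> = pair_T_nabla_bar_h - (- pair_T_nabla_bar_h) + pair_h torsion_Q2"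
    by (simp only: sum.distrib sum_subtractf first second torsion_h_term_cnj_eq_pair_h_Q2)
  finally show ?thesis by simp
qed

lemma pair_nabla_h_eq: "pair_nabla_h = 1/2 * (pair_nabla_h_T + pair_T_nabla_bar_h)"
  unfolding pair_nabla_h_def pair_nabla_h_T_def pair_T_nabla_bar_h_def
  by (simp only: distrib_left sum.distrib)

lemma pair_h_linear: "pair_h (\<lambda>a b. c * A a b + B a b) = c * pair_h A + pair_h B"
  unfolding pair_h_def by (simp add: algebra_simps sum.distrib sum_distrib_left)

theorem variation_formula:
  "tensor_pairing dN N N T T + tensor_pairing N dN N T T + tensor_pairing N N dN T T
     + tensor_pairing N N N dT T + tensor_pairing N N N T dT
   = pair_h (\<lambda>a b. - 2 * torsion_Q1 a b + torsion_Q2 a b) + 4 * pair_nabla_h"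
  unfolding pair_h_linear pair_nabla_h_eq tensor_pairing_dN_first tensor_pairing_dN_second
    tensor_pairing_dN_third tensor_pairing_dT_left tensor_pairing_dT_right
  by simp

end

section \<open>Variation of the Chern torsion\<close>

lemma torsion_variation_chern:
  assumes "hermitian_metric_at (G z)"
  shows "torsion_variation (\<lambda>a b. ginv G z $ a $ b) (\<lambda>i j k. tor G i j k z) (\<lambda>i j k. chris G i j k z)"
  by unfold_locales
     (simp_all add: tor_def chris_def sum_subtractf right_diff_distrib cnj_ginv[of G z, OF assms])

lemma has_vector_derivative_ginv:
  assumes "open I" "s \<in> I" and hermitian: "\<And>t. t \<in> I \<Longrightarrow> hermitian_metric_at (g t z)"
    and g': "((\<lambda>t. g t z) has_vector_derivative H) (at s)"
  shows "((\<lambda>t. ginv (g t) z $ k $ l) has_vector_derivative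
       - (\<Sum>x\<in>UNIV. \<Sum>y\<in>UNIV. ginv (g s) z $ k $ x * H $ y $ x * ginv (g s) z $ y $ l)) (at s)"
proof -
  have "((\<lambda>t. transpose (g t z) $ i $ j) has_vector_derivative transpose H $ i $ j) (at s)" for i j
    using has_vector_derivative_matrix_entry[OF g', of j i] by (simp add: transpose_def)
  with assms(1,2) hermitian_metric_invertible[OF hermitian]
  have "((\<lambda>t. matrix_inv (transpose (g t z)) $ k $ l) has_vector_derivative
       - (\<Sum>x\<in>UNIV. \<Sum>y\<in>UNIV. matrix_inv (transpose (g s z)) $ k $ x * transpose H $ x $ y
             * matrix_inv (transpose (g s z)) $ y $ l)) (at s)"
    by (rule has_vector_derivative_matrix_inv)
  then show ?thesis
    by (simp add: ginv_def transpose_def)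
qed

lemma has_vector_derivative_tor:
  assumes "C2_family g h I U" "s \<in> I" "z \<in> U"
  shows "((\<lambda>t. tor (g t) i j k z) has_vector_derivative
           dz (\<lambda>w. h s w $ j $ k) i z - dz (\<lambda>w. h s w $ i $ k) j z) (at s)"
proof -
  interpret C2_family g h I U by fact
  define Dg where "Dg t = frechet_derivative (g t) (at z)" for t
  have tor_eq: "tor (g t) i j k z = (Dg t (axis i 1) $ j $ k - \<i> * Dg t (axis i \<i>) $ j $ k) / 2
      - (Dg t (axis j 1) $ i $ k - \<i> * Dg t (axis j \<i>) $ i $ k) / 2" if "t \<in> I" for t
    unfolding tor_def Dg_def using slice_differentiable[OF that \<open>z \<in> U\<close>] by (simp add: dz_matrix_entry)
  have "((\<lambda>t. (Dg t (axis i 1) $ j $ k - \<i> * Dg t (axis i \<i>) $ j $ k) / 2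
      - (Dg t (axis j 1) $ i $ k - \<i> * Dg t (axis j \<i>) $ i $ k) / 2) has_vector_derivative
      dz (\<lambda>w. h s w $ j $ k) i z - dz (\<lambda>w. h s w $ i $ k) j z) (at s)"
    unfolding dz_matrix_entry[OF variation_differentiable[OF assms(2,3)]] Dg_def
    by (intro has_vector_derivative_diff has_vector_derivative_divide has_vector_derivative_mult_right
          has_vector_derivative_matrix_entry spatial_derivative_has_vector_derivative assms(2,3))
  then show ?thesis
    by (rule has_vector_derivative_transform_within_open[OF _ open_I \<open>s \<in> I\<close>]) (simp add: tor_eq)
qed

lemma dzb_variation_eq_cnj_dz:
  assumes "C2_family g h I U" "s \<in> I" "z \<in> U"
    and hermitian: "\<And>t w. t \<in> I \<Longrightarrow> w \<in> U \<Longrightarrow> hermitian_metric_at (g t w)"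
  shows "dzb (\<lambda>w. h s w $ m $ l) j z = cnj (dz (\<lambda>w. h s w $ l $ m) j z)"
proof -
  interpret C2_family g h I U by fact
  have "h s w $ m $ l = cnj (h s w $ l $ m)" if "w \<in> U" for w
  proof (rule has_vector_derivative_hermitian[OF open_I \<open>s \<in> I\<close> _ time_derivative[OF \<open>s \<in> I\<close> that]])
    show "g t w $ j $ i = cnj (g t w $ i $ j)" if "t \<in> I" for t i j
      using hermitian[OF \<open>t \<in> I\<close> \<open>w \<in> U\<close>] unfolding hermitian_metric_at_def by blast
  qed
  moreover have "(\<lambda>w. h s w $ l $ m) differentiable (at z)"
    using has_derivative_matrix_entry[OF variation_differentiable[OF assms(2,3)]]
    by (auto simp: differentiable_def)
  ultimately show ?thesis
    using open_U \<open>z \<in> U\<close> by (intro dzb_eq_cnj_dz)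
qed

theorem lemma10p5:
  fixes g h :: "real \<Rightarrow> complex^'n \<Rightarrow> complex^'n^'n"
    and I :: "real set" and U :: "(complex^'n) set"
    and s :: real and z :: "complex^'n"
  assumes "open I" and "open U"
    and "smooth_on (I \<times> U) (\<lambda>(t, w). g t w)"
    and "\<And>t w. t \<in> I \<Longrightarrow> w \<in> U \<Longrightarrow> hermitian_metric_at (g t w)"
    and "\<And>t w. t \<in> I \<Longrightarrow> w \<in> U \<Longrightarrow> ((\<lambda>r. g r w) has_vector_derivative h t w) (at t)"
    and "s \<in> I" and "z \<in> U"
  shows "((\<lambda>t. normT2 (g t) z) has_vector_derivative
           (inner11 (g s) z (h s z) (\<lambda>i j. - 2 * Q1 (g s) z i j + Q2 (g s) z i j)
            + 4 * innerNT (g s) (h s) z)) (at s)"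
proof -
  have family: "C2_family g h I U"
    using assms(1,2,3,5) by unfold_locales (auto simp: smooth_on_def)
  define N where "N t a b = ginv (g t) z $ a $ b" for t a b
  define T where "T t i j k = tor (g t) i j k z" for t i j k
  interpret V: torsion_variation "N s" "\<lambda>a b. h s z $ a $ b" "T s" "\<lambda>i j k. dz (\<lambda>w. h s w $ j $ k) i z"
      "\<lambda>i j k. chris (g s) i j k z"
    unfolding N_def T_def using assms(4,6,7) by (intro torsion_variation_chern) simp
  have "((\<lambda>t. N t a b) has_vector_derivative V.dN a b) (at s)" for a b
    unfolding N_def V.dN_def
    using has_vector_derivative_ginv[of I s g z, OF assms(1,6) assms(4)[OF _ assms(7)] assms(5)[OF assms(6,7)]] .
  moreover have "((\<lambda>t. T t i j k) has_vector_derivative V.dT i j k) (at s)" for i j k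
    unfolding T_def V.dT_def using has_vector_derivative_tor[OF family assms(6,7)] .
  ultimately have "((\<lambda>t. normT2 (g t) z) has_vector_derivative
      tensor_pairing V.dN (N s) (N s) (T s) (T s) + tensor_pairing (N s) V.dN (N s) (T s) (T s)
      + tensor_pairing (N s) (N s) V.dN (T s) (T s) + tensor_pairing (N s) (N s) (N s) V.dT (T s)
      + tensor_pairing (N s) (N s) (N s) (T s) V.dT) (at s)"
    unfolding normT2_eq_tensor_pairing N_def[symmetric] T_def[symmetric]
    by (intro has_vector_derivative_tensor_pairing)
  moreover have "dzb (\<lambda>w. h s w $ m $ l) j z = cnj (dz (\<lambda>w. h s w $ l $ m) j z)" for j l m
    using dzb_variation_eq_cnj_dz[OF family assms(6,7,4)] .
  ultimately show ?thesis
    unfolding V.variation_formula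
    by (simp add: inner11_def Q1_def Q2_def innerNT_def nabh_def nabbh_def V.pair_h_def V.torsion_Q1_def
        V.torsion_Q2_def V.pair_nabla_h_def V.nabla_h_def V.nabla_bar_h_def N_def T_def)
qed

end
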